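(* Let $P_1=(x_1,v_1)$ and $P_2=(x_2,v_2)$ be points of $\mathcal{H}$, let $\theta_i=\delta(x_i,v_i)$ for $i=1,2$, and suppose $0\le\theta_1\le\theta_2<2\pi$ and $1\le v_1\le v_2$. Then $d_H((0,1),P_1)\le d_H((0,1),P_2)$.
   Context: Let $\mathcal{H}=\{(x,v)\in\mathbb{R}^2:v\ge0\}$ and $d_H$ the Riemannian distance on $\mathcal{H}$ induced by $ds^2=v^{-1}(dx^2+dv^2)$ on the open upper half-plane (extended to the boundary). For $v\ge0$, $0<|\delta|<2\pi$, $f(v,\delta)=\frac{(v+1)(\delta-\sin\delta)+2\sqrt v(2\sin\frac\delta2-\delta\cos\frac\delta2)}{2\sin^2\frac\delta2}$, $f(v,0)=0$, and $\delta(x,v)$ denotes the unique $\delta\in(-2\pi,2\pi)$ with $f(v,\delta)=x$. *)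

theory Defs
  imports "HOL-Analysis.Analysis"
begin

definition Hplane :: "(real \<times> real) set" where
  "Hplane = {p. snd p \<ge> 0}"

text \<open>At boundary points (v = 0) a non-zero velocity has infinite cost; such times
  form a null set for admissible curves in any case of finite length.\<close>
definition hspeed :: "(real \<times> real) \<Rightarrow> (real \<times> real) \<Rightarrow> ennreal" where
  "hspeed p w = (if snd p > 0 then ennreal (norm w / sqrt (snd p))
                 else if w = 0 then 0 else \<infinity>)"

definition hlength :: "(real \<Rightarrow> real \<times> real) \<Rightarrow> ennreal" where
  "hlength \<gamma> = (\<integral>\<^sup>+ t \<in> {0..1}. hspeed (\<gamma> t) (vector_derivative \<gamma> (at t)) \<partial>lborel)"

definition hpaths :: "(real \<times> real) \<Rightarrow> (real \<times> real) \<Rightarrow> (real \<Rightarrow> real \<times> real) set" where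
  "hpaths P Q = {\<gamma>. \<gamma> piecewise_C1_differentiable_on {0..1} \<and> \<gamma> ` {0..1} \<subseteq> Hplane
                    \<and> \<gamma> 0 = P \<and> \<gamma> 1 = Q}"

definition dH :: "(real \<times> real) \<Rightarrow> (real \<times> real) \<Rightarrow> ennreal" where
  "dH P Q = (INF \<gamma> \<in> hpaths P Q. hlength \<gamma>)"

definition fdelta :: "real \<Rightarrow> real \<Rightarrow> real" where
  "fdelta v d = (if d = 0 then 0 else
     ((v + 1) * (d - sin d) + 2 * sqrt v * (2 * sin (d / 2) - d * cos (d / 2)))
       / (2 * (sin (d / 2))^2))"

definition delta :: "real \<Rightarrow> real \<Rightarrow> real" where
  "delta x v = (THE d. -2*pi < d \<and> d < 2*pi \<and> fdelta v d = x)"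

end

theory Submission
  imports Defs "HOL-Real_Asymp.Real_Asymp"
begin

text \<open>Writing \<open>\<delta> = 2t\<close>, the equation \<open>f(v,\<delta>) = x\<close> becomes
  \<open>x = (v+1) A(t) + 2\<surd>v B(t)\<close> with \<open>A(t) = (t - sin t cos t)/sin\<^sup>2 t\<close> and
  \<open>B(t) = (sin t - t cos t)/sin\<^sup>2 t\<close> odd, positive and increasing on \<open>(0,\<pi>)\<close>; so \<open>\<delta>\<close> is
  well defined, and \<open>0 \<le> \<theta>\<^sub>1 \<le> \<theta>\<^sub>2\<close>, \<open>1 \<le> v\<^sub>1 \<le> v\<^sub>2\<close> give
  \<open>0 \<le> x\<^sub>1/\<surd>v\<^sub>1 \<le> x\<^sub>2/\<surd>v\<^sub>2\<close>.
  A map \<open>(x,v) \<mapsto> (c x, k v)\<close> with \<open>k 1 = 1\<close>, \<open>c\<^sup>2 u \<le> k u\<close> and \<open>k'(u)\<^sup>2 u \<le> k u\<close>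
  does not increase the length element \<open>|w|/\<surd>v\<close> and fixes \<open>(0,1)\<close>, hence does not increase
  \<open>d\<^sub>H((0,1),\<cdot>)\<close>. For \<open>c = x\<^sub>1/x\<^sub>2\<close> such a \<open>k\<close> with \<open>k v\<^sub>2 = v\<^sub>1\<close> exists, so it maps
  \<open>P\<^sub>2\<close> to \<open>P\<^sub>1\<close>.\<close>

section \<open>The function \<open>f\<close> and the inverse \<open>\<delta>\<close>\<close>

definition numA :: "real \<Rightarrow> real" where "numA t = t - sin t * cos t"
definition numB :: "real \<Rightarrow> real" where "numB t = sin t - t * cos t"
definition numC :: "real \<Rightarrow> real" where "numC t = t * (1 + (cos t)\<^sup>2) - 2 * sin t * cos t"

definition coefA :: "real \<Rightarrow> real" where "coefA t = numA t / (sin t)\<^sup>2"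
definition coefB :: "real \<Rightarrow> real" where "coefB t = numB t / (sin t)\<^sup>2"

definition fhalf :: "real \<Rightarrow> real \<Rightarrow> real" where
  "fhalf v t = (v + 1) * coefA t + 2 * sqrt v * coefB t"

lemma fdelta_eq_fhalf: "fdelta v d = fhalf v (d / 2)"
proof -
  have "sin d = 2 * sin (d / 2) * cos (d / 2)"
    using sin_double[of "d / 2"] by simp
  then show ?thesis
    by (cases "sin (d / 2) = 0")
       (simp_all add: fdelta_def fhalf_def coefA_def coefB_def numA_def numB_def field_simps)
qed

lemma numA_deriv: "(numA has_real_derivative 2 * (sin x)\<^sup>2) (at x)"
proof -
  have "(numA has_real_derivative 1 - (cos x * cos x - sin x * sin x)) (at x)"
    unfolding numA_def[abs_def] by (auto intro!: derivative_eq_intros)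
  moreover have "1 - (cos x * cos x - sin x * sin x) = 2 * (sin x)\<^sup>2"
    using sin_cos_squared_add3[of x] unfolding power2_eq_square by linarith
  ultimately show ?thesis by simp
qed

lemma numB_deriv: "(numB has_real_derivative x * sin x) (at x)"
  unfolding numB_def[abs_def] by (auto intro!: derivative_eq_intros simp: algebra_simps)

lemma numC_deriv: "(numC has_real_derivative sin x * (2 * numB x + sin x)) (at x)"
proof -
  have "(numC has_real_derivative (1 + (cos x)\<^sup>2) - 2 * x * sin x * cos x
          - 2 * (cos x * cos x - sin x * sin x)) (at x)"
    unfolding numC_def[abs_def] by (auto intro!: derivative_eq_intros simp: algebra_simps)
  moreover have "(1 + (cos x)\<^sup>2) - 2 * x * sin x * cos x - 2 * (cos x * cos x - sin x * sin x)
      = sin x * (2 * numB x + sin x)"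
    using sin_cos_squared_add3[of x] unfolding numB_def by (simp add: power2_eq_square algebra_simps)
  ultimately show ?thesis by simp
qed

lemma pos_if_deriv_pos:
  fixes f f' :: "real \<Rightarrow> real"
  assumes "\<And>x. (f has_real_derivative f' x) (at x)" and "\<And>x. 0 < x \<Longrightarrow> x < t \<Longrightarrow> 0 < f' x"
    and "f 0 = 0" and "0 < t"
  shows "0 < f t"
proof -
  have "f 0 < f t"
  proof (rule DERIV_pos_imp_increasing_open[OF \<open>0 < t\<close>])
    show "continuous_on {0..t} f"
      by (meson DERIV_isCont continuous_at_imp_continuous_on assms(1))
  qed (use assms in blast)
  with \<open>f 0 = 0\<close> show ?thesis by simp
qed

lemma numA_pos: assumes "0 < t" "t < pi" shows "0 < numA t"
proof (rule pos_if_deriv_pos[OF numA_deriv _ _ \<open>0 < t\<close>])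
  fix x assume "0 < x" "x < t"
  moreover from this \<open>t < pi\<close> have "0 < sin x" by (intro sin_gt_zero) auto
  ultimately show "0 < 2 * (sin x)\<^sup>2" by simp
qed (simp add: numA_def)

lemma numB_pos: assumes "0 < t" "t < pi" shows "0 < numB t"
proof (rule pos_if_deriv_pos[OF numB_deriv _ _ \<open>0 < t\<close>])
  fix x assume "0 < x" "x < t"
  moreover from this \<open>t < pi\<close> have "0 < sin x" by (intro sin_gt_zero) auto
  ultimately show "0 < x * sin x" by simp
qed (simp add: numB_def)

lemma numC_pos: assumes "0 < t" "t < pi" shows "0 < numC t"
proof (rule pos_if_deriv_pos[OF numC_deriv _ _ \<open>0 < t\<close>])
  fix x assume "0 < x" "x < t"
  moreover from this \<open>t < pi\<close> have "0 < sin x" by (intro sin_gt_zero) auto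
  ultimately show "0 < sin x * (2 * numB x + sin x)"
    using numB_pos[of x] \<open>t < pi\<close> by simp
qed (simp add: numC_def)

lemma strict_mono_on_div_sin_sq:
  fixes N N' :: "real \<Rightarrow> real"
  assumes deriv: "\<And>x. (N has_real_derivative N' x) (at x)"
    and pos: "\<And>x. 0 < x \<Longrightarrow> x < pi \<Longrightarrow> 2 * N x * cos x < N' x * sin x"
  shows "strict_mono_on {0<..<pi} (\<lambda>t. N t / (sin t)\<^sup>2)"
proof (rule strict_mono_onI)
  fix s t :: real assume "s \<in> {0<..<pi}" "t \<in> {0<..<pi}" "s < t"
  show "N s / (sin s)\<^sup>2 < N t / (sin t)\<^sup>2"
  proof (rule DERIV_pos_imp_increasing[OF \<open>s < t\<close>])
    fix x assume "s \<le> x" "x \<le> t"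
    with \<open>s \<in> {0<..<pi}\<close> \<open>t \<in> {0<..<pi}\<close> have x: "0 < x" "x < pi" by auto
    then have "0 < sin x" by (rule sin_gt_zero)
    have "((\<lambda>t. N t / (sin t)\<^sup>2) has_real_derivative
            (N' x * sin x - 2 * N x * cos x) / (sin x ^ 3)) (at x)"
      using \<open>0 < sin x\<close>
      by (auto intro!: derivative_eq_intros deriv simp: field_simps power2_eq_square power3_eq_cube)
    moreover have "0 < (N' x * sin x - 2 * N x * cos x) / (sin x ^ 3)"
      using pos[OF x] \<open>0 < sin x\<close> by simp
    ultimately show "\<exists>y. ((\<lambda>t. N t / (sin t)\<^sup>2) has_real_derivative y) (at x) \<and> 0 < y"
      by blast
  qed
qed

lemma coefA_strict_mono: "strict_mono_on {0<..<pi} coefA"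
  unfolding coefA_def[abs_def]
proof (rule strict_mono_on_div_sin_sq[OF numA_deriv])
  fix x :: real assume "0 < x" "x < pi"
  have "2 * (sin x)\<^sup>2 * sin x - 2 * numA x * cos x = 2 * numB x"
    using sin_cos_squared_add3[of x] unfolding numA_def numB_def power2_eq_square by algebra
  with numB_pos[OF \<open>0 < x\<close> \<open>x < pi\<close>] show "2 * numA x * cos x < 2 * (sin x)\<^sup>2 * sin x"
    by linarith
qed

lemma coefB_strict_mono: "strict_mono_on {0<..<pi} coefB"
  unfolding coefB_def[abs_def]
proof (rule strict_mono_on_div_sin_sq[OF numB_deriv])
  fix x :: real assume "0 < x" "x < pi"
  have "x * sin x * sin x - 2 * numB x * cos x = numC x"
    using sin_cos_squared_add3[of x] unfolding numB_def numC_def power2_eq_square by algebra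
  with numC_pos[OF \<open>0 < x\<close> \<open>x < pi\<close>] show "2 * numB x * cos x < x * sin x * sin x"
    by linarith
qed

lemma coefA_pos: "0 < t \<Longrightarrow> t < pi \<Longrightarrow> 0 < coefA t"
  using numA_pos[of t] sin_gt_zero[of t] by (simp add: coefA_def)

lemma coefB_pos: "0 < t \<Longrightarrow> t < pi \<Longrightarrow> 0 < coefB t"
  using numB_pos[of t] sin_gt_zero[of t] by (simp add: coefB_def)

lemma fhalf_minus: "fhalf v (- t) = - fhalf v t"
proof -
  have "numA (- t) = - numA t" "numB (- t) = - numB t"
    by (simp_all add: numA_def numB_def)
  then show ?thesis
    by (simp add: fhalf_def coefA_def coefB_def)
qed

lemma fhalf_pos: "0 \<le> v \<Longrightarrow> 0 < t \<Longrightarrow> t < pi \<Longrightarrow> 0 < fhalf v t"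
  unfolding fhalf_def by (intro add_pos_nonneg) (simp_all add: coefA_pos coefB_pos less_imp_le)

lemma strict_mono_on_odd:
  fixes f :: "real \<Rightarrow> real"
  assumes odd: "\<And>t. f (- t) = - f t" and mono: "strict_mono_on {0<..<a} f"
    and pos: "\<And>t. 0 < t \<Longrightarrow> t < a \<Longrightarrow> 0 < f t"
  shows "strict_mono_on {-a<..<a} f"
proof (rule strict_mono_onI)
  have f0: "f 0 = 0" using odd[of 0] by simp
  fix s t assume "s \<in> {-a<..<a}" "t \<in> {-a<..<a}" "s < t"
  then consider "0 \<le> s" | "s < 0" "0 \<le> t" | "t < 0" by linarith
  then show "f s < f t"
  proof cases
    case 1
    with \<open>s < t\<close> \<open>t \<in> {-a<..<a}\<close> show ?thesis
      using mono pos[of t] f0 by (cases "s = 0") (auto simp: strict_mono_on_def)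
  next
    case 2
    with \<open>s \<in> {-a<..<a}\<close> \<open>t \<in> {-a<..<a}\<close> show ?thesis
      using pos[of "- s"] pos[of t] odd[of s] f0 by (cases "t = 0") auto
  next
    case 3
    with \<open>s \<in> {-a<..<a}\<close> \<open>s < t\<close> have "f (- t) < f (- s)"
      using mono by (auto simp: strict_mono_on_def)
    then show ?thesis by (simp add: odd)
  qed
qed

lemma fhalf_strict_mono:
  assumes "0 \<le> v"
  shows "strict_mono_on {-pi<..<pi} (fhalf v)"
proof (rule strict_mono_on_odd[where f = "fhalf v", OF fhalf_minus _ fhalf_pos[OF assms]])
  show "strict_mono_on {0<..<pi} (fhalf v)"
  proof (rule strict_mono_onI)
    fix s t assume st: "s \<in> {0<..<pi}" "t \<in> {0<..<pi}" "s < t"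
    have "(v + 1) * coefA s < (v + 1) * coefA t"
      using strict_mono_onD[OF coefA_strict_mono st] assms by simp
    moreover have "2 * sqrt v * coefB s \<le> 2 * sqrt v * coefB t"
      using strict_mono_onD[OF coefB_strict_mono st] assms by (simp add: mult_left_mono)
    ultimately show "fhalf v s < fhalf v t"
      unfolding fhalf_def by linarith
  qed
qed

lemma fhalf_le:
  assumes "0 \<le> v" "0 \<le> s" "s \<le> t" "t < pi"
  shows "0 \<le> fhalf v s" "fhalf v s \<le> fhalf v t"
proof -
  have "fhalf v 0 = 0" using fhalf_minus[of v 0] by simp
  with assms show "0 \<le> fhalf v s" "fhalf v s \<le> fhalf v t"
    using strict_mono_on_leD[OF fhalf_strict_mono[OF assms(1)], of 0 s]
      strict_mono_on_leD[OF fhalf_strict_mono[OF assms(1)], of s t] by simp_all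
qed

lemma fhalf_tendsto_zero: "(fhalf v \<longlongrightarrow> 0) (at_right 0)"
proof -
  have "(coefA \<longlongrightarrow> 0) (at_right 0)" "(coefB \<longlongrightarrow> 0) (at_right 0)"
    unfolding coefA_def[abs_def] coefB_def[abs_def] numA_def numB_def by real_asymp+
  then have "((\<lambda>t. (v + 1) * coefA t + 2 * sqrt v * coefB t) \<longlongrightarrow> (v + 1) * 0 + 2 * sqrt v * 0)
      (at_right 0)"
    by (intro tendsto_intros)
  then show ?thesis by (simp add: fhalf_def[abs_def])
qed

lemma fhalf_tendsto_at_top:
  assumes "0 \<le> v"
  shows "filterlim (fhalf v) at_top (at_left pi)"
proof (rule filterlim_at_top_mono)
  show "filterlim coefA at_top (at_left pi)"
    unfolding coefA_def[abs_def] numA_def by real_asymp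
  have "\<forall>\<^sub>F t in at_left pi. t \<in> {0<..<pi}"
    by (rule eventually_at_left_real) simp
  then show "\<forall>\<^sub>F t in at_left pi. coefA t \<le> fhalf v t"
  proof (rule eventually_mono)
    fix t :: real assume "t \<in> {0<..<pi}"
    then have "0 < coefA t" "0 < coefB t" by (simp_all add: coefA_pos coefB_pos)
    with assms have "coefA t \<le> (v + 1) * coefA t" "0 \<le> 2 * sqrt v * coefB t" by simp_all
    then show "coefA t \<le> fhalf v t" unfolding fhalf_def by linarith
  qed
qed

lemma fhalf_continuous_on: "continuous_on {0<..<pi} (fhalf v)"
proof -
  have "sin t \<noteq> 0" if "t \<in> {0<..<pi}" for t
    using sin_gt_zero[of t] that by simp
  then show ?thesis
    unfolding fhalf_def[abs_def] coefA_def[abs_def] coefB_def[abs_def] numA_def numB_def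
    by (intro continuous_intros) simp_all
qed

lemma fhalf_attains_pos:
  assumes "0 \<le> v" "0 < y"
  shows "\<exists>t\<in>{0<..<pi}. fhalf v t = y"
proof -
  have "\<forall>\<^sub>F t in at_right 0. fhalf v t < y \<and> t \<in> {0<..<pi}"
    using order_tendstoD(2)[OF fhalf_tendsto_zero \<open>0 < y\<close>]
    by (rule eventually_conj) (rule eventually_at_right_real, simp)
  then obtain a where a: "fhalf v a < y" "a \<in> {0<..<pi}"
    using eventually_happens'[OF trivial_limit_at_right_real] by blast
  have "\<forall>\<^sub>F t in at_left pi. y < fhalf v t \<and> t \<in> {a<..<pi}"
    using filterlim_at_top_dense[THEN iffD1, OF fhalf_tendsto_at_top[OF assms(1)], rule_format, of y]
    by (rule eventually_conj) (rule eventually_at_left_real, use a in simp)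
  then obtain b where b: "y < fhalf v b" "b \<in> {a<..<pi}"
    using eventually_happens'[OF trivial_limit_at_left_real] by blast
  have "continuous_on {a..b} (fhalf v)"
    using fhalf_continuous_on by (rule continuous_on_subset) (use a b in auto)
  then obtain t where "a \<le> t" "t \<le> b" "fhalf v t = y"
    using IVT'[of "fhalf v" a y b] a b by auto
  with a b show ?thesis by auto
qed

lemma fhalf_surj:
  assumes "0 \<le> v"
  shows "\<exists>t\<in>{-pi<..<pi}. fhalf v t = x"
proof (cases x "0::real" rule: linorder_cases)
  case less
  then obtain t where "t \<in> {0<..<pi}" "fhalf v t = - x"
    using fhalf_attains_pos[OF assms, of "- x"] by auto
  then show ?thesis by (intro bexI[of _ "- t"]) (auto simp: fhalf_minus)
next
  case equal
  have "fhalf v 0 = 0" using fhalf_minus[of v 0] by simp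
  with equal show ?thesis by (intro bexI[of _ 0]) auto
next
  case greater
  then show ?thesis using fhalf_attains_pos[OF assms, of x] by auto
qed

lemma fdelta_delta:
  assumes "0 \<le> v"
  shows "fdelta v (delta x v) = x"
proof -
  have "strict_mono_on {-2*pi<..<2*pi} (fdelta v)"
  proof (rule strict_mono_onI)
    fix d e :: real assume "d \<in> {-2*pi<..<2*pi}" "e \<in> {-2*pi<..<2*pi}" "d < e"
    then show "fdelta v d < fdelta v e"
      unfolding fdelta_eq_fhalf by (intro strict_mono_onD[OF fhalf_strict_mono[OF assms]]) auto
  qed
  then have inj: "inj_on (fdelta v) {-2*pi<..<2*pi}"
    by (rule strict_mono_on_imp_inj_on)
  obtain t where t: "t \<in> {-pi<..<pi}" "fhalf v t = x"
    using fhalf_surj[OF assms] by blast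
  have "\<exists>!d. -2*pi < d \<and> d < 2*pi \<and> fdelta v d = x"
  proof (rule ex1I[of _ "2 * t"])
    show "-2*pi < 2 * t \<and> 2 * t < 2*pi \<and> fdelta v (2 * t) = x"
      using t by (simp add: fdelta_eq_fhalf)
    fix d assume "-2*pi < d \<and> d < 2*pi \<and> fdelta v d = x"
    with t show "d = 2 * t"
      using inj_onD[OF inj, of d "2 * t"] by (simp add: fdelta_eq_fhalf)
  qed
  from theI'[OF this] show ?thesis
    unfolding delta_def by blast
qed

lemma fhalf_mul_sqrt_le:
  assumes "1 \<le> v1" "v1 \<le> v2" "0 \<le> t" "t < pi"
  shows "fhalf v1 t * sqrt v2 \<le> fhalf v2 t * sqrt v1"
    and "v1 < v2 \<Longrightarrow> 0 < t \<Longrightarrow> fhalf v1 t * sqrt v2 < fhalf v2 t * sqrt v1"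
proof -
  define s1 s2 where "s1 = sqrt v1" and "s2 = sqrt v2"
  have s: "1 \<le> s1" "s1 \<le> s2" "v1 = s1\<^sup>2" "v2 = s2\<^sup>2"
    using assms by (simp_all add: s1_def s2_def)
  have diff: "fhalf v2 t * sqrt v1 - fhalf v1 t * sqrt v2 = coefA t * ((s2 - s1) * (s1 * s2 - 1))"
    unfolding fhalf_def s1_def[symmetric] s2_def[symmetric] s(3,4)
    using s(1,2) by (simp add: algebra_simps power2_eq_square)
  have "1 \<le> s1 * s2" using mult_mono[of 1 s1 1 s2] s by simp
  have "0 \<le> coefA t"
    using coefA_pos[of t] assms by (cases "t = 0") (auto simp: coefA_def numA_def)
  then have "0 \<le> coefA t * ((s2 - s1) * (s1 * s2 - 1))"
    using s \<open>1 \<le> s1 * s2\<close> by (intro mult_nonneg_nonneg) auto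
  with diff show "fhalf v1 t * sqrt v2 \<le> fhalf v2 t * sqrt v1" by linarith
  assume "v1 < v2" "0 < t"
  then have "s1 < s2" "0 < coefA t"
    using assms by (simp_all add: s1_def s2_def coefA_pos)
  moreover have "1 < s1 * s2" using mult_le_less_imp_less[of 1 s1 1 s2] s \<open>s1 < s2\<close> by simp
  ultimately have "0 < coefA t * ((s2 - s1) * (s1 * s2 - 1))"
    by (intro mult_pos_pos) auto
  with diff show "fhalf v1 t * sqrt v2 < fhalf v2 t * sqrt v1" by linarith
qed

section \<open>Maps that shorten paths in the half-plane\<close>

definition contraction :: "real \<Rightarrow> (real \<Rightarrow> real) \<Rightarrow> real \<times> real \<Rightarrow> real \<times> real" where
  "contraction c k p = (c * fst p, k (snd p))"

lemma hspeed_contraction_le: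
  fixes k :: "real \<Rightarrow> real"
  assumes "0 \<le> snd p" and "0 < snd p \<Longrightarrow> 0 < k (snd p)"
    and "c\<^sup>2 * snd p \<le> k (snd p)" and "K\<^sup>2 * snd p \<le> k (snd p)"
  shows "hspeed (contraction c k p) (c * fst w, K * snd w) \<le> hspeed p w"
proof (cases "0 < snd p")
  case True
  define u where "u = snd p"
  have u: "0 < u" "0 < k u" using True assms(2) by (simp_all add: u_def)
  have "((c * fst w)\<^sup>2 + (K * snd w)\<^sup>2) * u = (fst w)\<^sup>2 * (c\<^sup>2 * u) + (snd w)\<^sup>2 * (K\<^sup>2 * u)"
    by (simp add: power_mult_distrib algebra_simps)
  also have "\<dots> \<le> ((fst w)\<^sup>2 + (snd w)\<^sup>2) * k u"
    using assms(3,4) unfolding u_def[symmetric]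
    by (simp add: distrib_right add_mono mult_left_mono)
  finally have "((c * fst w)\<^sup>2 + (K * snd w)\<^sup>2) / k u \<le> ((fst w)\<^sup>2 + (snd w)\<^sup>2) / u"
    using u by (simp add: field_simps)
  then have "sqrt ((c * fst w)\<^sup>2 + (K * snd w)\<^sup>2) / sqrt (k u)
      \<le> sqrt ((fst w)\<^sup>2 + (snd w)\<^sup>2) / sqrt u"
    by (simp flip: real_sqrt_divide)
  then show ?thesis
    using u by (cases w) (simp add: hspeed_def contraction_def norm_Pair u_def ennreal_leI)
next
  case False
  with assms(1) have "snd p = 0" by simp
  then show ?thesis
    by (cases "w = 0") (simp_all add: hspeed_def contraction_def zero_prod_def)
qed

lemma has_vector_derivative_contraction:
  fixes \<gamma> :: "real \<Rightarrow> real \<times> real"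
  assumes "(\<gamma> has_vector_derivative D) (at t)" and "(k has_real_derivative K) (at (snd (\<gamma> t)))"
  shows "(contraction c k \<circ> \<gamma> has_vector_derivative (c * fst D, K * snd D)) (at t)"
proof -
  have "(\<gamma> has_derivative (\<lambda>h. h *\<^sub>R D)) (at t)"
    using assms(1) by (simp add: has_vector_derivative_def)
  from has_derivative_fst[OF this] has_derivative_snd[OF this]
  have "((\<lambda>t. fst (\<gamma> t)) has_real_derivative fst D) (at t)"
    "((\<lambda>t. snd (\<gamma> t)) has_real_derivative snd D) (at t)"
    by (simp_all add: has_field_derivative_def mult.commute[of _ "fst D"] mult.commute[of _ "snd D"])
  then have "((\<lambda>t. c * fst (\<gamma> t)) has_real_derivative c * fst D) (at t)"
    "((\<lambda>t. k (snd (\<gamma> t))) has_real_derivative K * snd D) (at t)"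
    by (auto intro: DERIV_cmult DERIV_chain2[where g = "\<lambda>t. snd (\<gamma> t)" and x = t, OF assms(2)])
  then have "((\<lambda>t. (c * fst (\<gamma> t), k (snd (\<gamma> t)))) has_vector_derivative (c * fst D, K * snd D)) (at t)"
    by (intro has_vector_derivative_Pair) (simp_all add: has_real_derivative_iff_has_vector_derivative)
  then show ?thesis
    by (simp add: contraction_def comp_def)
qed

lemma piecewise_C1_contraction:
  fixes \<gamma> :: "real \<Rightarrow> real \<times> real"
  assumes "\<gamma> piecewise_C1_differentiable_on {0..1}"
    and deriv: "\<And>u. (k has_real_derivative k' u) (at u)" and "continuous_on UNIV k'"
  shows "contraction c k \<circ> \<gamma> piecewise_C1_differentiable_on {0..1}"
proof -
  obtain S D where "finite S" and cont: "continuous_on {0..1} \<gamma>"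
    and D: "\<And>t. t \<in> {0..1} - S \<Longrightarrow> (\<gamma> has_vector_derivative D t) (at t)"
    and "continuous_on ({0..1} - S) D"
    using assms(1) unfolding piecewise_C1_differentiable_on_def C1_differentiable_on_def by blast
  have "continuous_on UNIV k"
    using deriv by (meson DERIV_isCont continuous_at_imp_continuous_on)
  have fst: "continuous_on {0..1} (\<lambda>t. fst (\<gamma> t))" and snd: "continuous_on {0..1} (\<lambda>t. snd (\<gamma> t))"
    using cont by (rule continuous_on_fst, rule continuous_on_snd)
  have "continuous_on {0..1} (\<lambda>t. k (snd (\<gamma> t)))"
    by (rule continuous_on_compose2[OF \<open>continuous_on UNIV k\<close> snd]) simp
  then have cont': "continuous_on {0..1} (contraction c k \<circ> \<gamma>)"
    unfolding contraction_def comp_def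
    by (rule continuous_on_Pair[OF continuous_on_mult_left[OF fst]])
  have "continuous_on ({0..1} - S) (\<lambda>t. k' (snd (\<gamma> t)))"
    by (rule continuous_on_compose2[OF \<open>continuous_on UNIV k'\<close> continuous_on_subset[OF snd]]) auto
  then have D': "continuous_on ({0..1} - S) (\<lambda>t. (c * fst (D t), k' (snd (\<gamma> t)) * snd (D t)))"
    using continuous_on_fst[OF \<open>continuous_on ({0..1} - S) D\<close>]
      continuous_on_snd[OF \<open>continuous_on ({0..1} - S) D\<close>]
    by (intro continuous_on_Pair continuous_on_mult_left continuous_on_mult)
  have "\<forall>t\<in>{0..1} - S. (contraction c k \<circ> \<gamma> has_vector_derivative
      (c * fst (D t), k' (snd (\<gamma> t)) * snd (D t))) (at t)"
    using has_vector_derivative_contraction[OF D deriv] by simp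
  with D' have "contraction c k \<circ> \<gamma> C1_differentiable_on {0..1} - S"
    unfolding C1_differentiable_on_def by (intro exI[of _ "\<lambda>t. (c * fst (D t), k' (snd (\<gamma> t)) * snd (D t))"]) simp
  with cont' \<open>finite S\<close> show ?thesis
    unfolding piecewise_C1_differentiable_on_def by (intro conjI exI[of _ S]) simp_all
qed

lemma hlength_contraction_le:
  fixes \<gamma> :: "real \<Rightarrow> real \<times> real" and k k' :: "real \<Rightarrow> real"
  assumes "\<gamma> piecewise_C1_differentiable_on {0..1}" and "\<gamma> ` {0..1} \<subseteq> Hplane"
    and deriv: "\<And>u. (k has_real_derivative k' u) (at u)"
    and pos: "\<And>u. 0 < u \<Longrightarrow> 0 < k u"
    and le_c: "\<And>u. 0 \<le> u \<Longrightarrow> c\<^sup>2 * u \<le> k u"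
    and le_deriv: "\<And>u. 0 \<le> u \<Longrightarrow> (k' u)\<^sup>2 * u \<le> k u"
  shows "hlength (contraction c k \<circ> \<gamma>) \<le> hlength \<gamma>"
proof -
  obtain S D where "finite S"
    and D: "\<And>t. t \<in> {0..1} - S \<Longrightarrow> (\<gamma> has_vector_derivative D t) (at t)"
    using assms(1) unfolding piecewise_C1_differentiable_on_def C1_differentiable_on_def by blast
  have "hspeed ((contraction c k \<circ> \<gamma>) t) (vector_derivative (contraction c k \<circ> \<gamma>) (at t))
      \<le> hspeed (\<gamma> t) (vector_derivative \<gamma> (at t))" if "t \<in> {0..1} - S" for t
  proof -
    have "0 \<le> snd (\<gamma> t)" using assms(2) that by (auto simp: Hplane_def image_subset_iff)
    then have "hspeed (contraction c k (\<gamma> t)) (c * fst (D t), k' (snd (\<gamma> t)) * snd (D t))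
        \<le> hspeed (\<gamma> t) (D t)"
      by (intro hspeed_contraction_le pos le_c le_deriv)
    then show ?thesis
      using vector_derivative_at[OF D[OF that]]
        vector_derivative_at[OF has_vector_derivative_contraction[OF D[OF that] deriv]]
      by simp
  qed
  note le = this
  have "AE t in lborel. t \<notin> S"
    using \<open>finite S\<close> by (intro AE_not_in finite_imp_null_set_lborel)
  then show ?thesis
    unfolding hlength_def
  proof (rule nn_integral_mono_AE[OF AE_mp], intro AE_I2 impI)
    fix t assume "t \<notin> S"
    with le show "hspeed ((contraction c k \<circ> \<gamma>) t) (vector_derivative (contraction c k \<circ> \<gamma>) (at t))
        * indicator {0..1} t \<le> hspeed (\<gamma> t) (vector_derivative \<gamma> (at t)) * indicator {0..1} t"
      by (cases "t \<in> {0..1}") simp_all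
  qed
qed

lemma dH_contraction_le:
  fixes k k' :: "real \<Rightarrow> real"
  assumes deriv: "\<And>u. (k has_real_derivative k' u) (at u)" and "continuous_on UNIV k'"
    and "k 1 = 1"
    and pos: "\<And>u. 0 < u \<Longrightarrow> 0 < k u"
    and le_c: "\<And>u. 0 \<le> u \<Longrightarrow> c\<^sup>2 * u \<le> k u"
    and le_deriv: "\<And>u. 0 \<le> u \<Longrightarrow> (k' u)\<^sup>2 * u \<le> k u"
  shows "dH (0, 1) (c * x, k v) \<le> dH (0, 1) (x, v)"
  unfolding dH_def
proof (rule INF_mono)
  fix \<gamma> assume "\<gamma> \<in> hpaths (0, 1) (x, v)"
  then have \<gamma>: "\<gamma> piecewise_C1_differentiable_on {0..1}" "\<gamma> ` {0..1} \<subseteq> Hplane"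
    "\<gamma> 0 = (0, 1)" "\<gamma> 1 = (x, v)"
    by (auto simp: hpaths_def)
  have "0 \<le> k u" if "0 \<le> u" for u
  proof -
    have "0 \<le> c\<^sup>2 * u" using that by simp
    with le_c[OF that] show ?thesis by linarith
  qed
  with \<gamma>(2) have "(contraction c k \<circ> \<gamma>) ` {0..1} \<subseteq> Hplane"
    by (auto simp: Hplane_def contraction_def)
  with \<gamma> have "contraction c k \<circ> \<gamma> \<in> hpaths (0, 1) (c * x, k v)"
    using piecewise_C1_contraction[OF \<gamma>(1) deriv \<open>continuous_on UNIV k'\<close>] \<open>k 1 = 1\<close>
    by (simp add: hpaths_def contraction_def)
  moreover have "hlength (contraction c k \<circ> \<gamma>) \<le> hlength \<gamma>"
    by (rule hlength_contraction_le[OF \<gamma>(1,2) deriv pos le_c le_deriv])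
  ultimately show "\<exists>\<eta>\<in>hpaths (0, 1) (c * x, k v). hlength \<eta> \<le> hlength \<gamma>" by blast
qed

section \<open>Comparison of distances from \<open>(0,1)\<close>\<close>

lemma has_real_derivative_exp_tail:
  fixes a b p q L w u :: real
  assumes "a * w + b = p * w + q" and "a = p - q * L"
  shows "((\<lambda>u. if u \<in> {..w} then a * u + b else p * u + q * exp (- L * (u - w)))
      has_real_derivative (if u \<in> {..w} then a else p - q * L * exp (- L * (u - w)))) (at u)"
  unfolding has_real_derivative_iff_has_vector_derivative
proof (rule has_vector_derivative_If_within_closures[where S = "{..w}" and T = "{w<..}"])
  show "u \<in> {..w} \<union> {w<..}" "UNIV = {..w} \<union> {w<..}" by auto
  fix x
  have "((\<lambda>u. a * u + b) has_real_derivative a) (at x)"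
    by (auto intro!: derivative_eq_intros)
  then show "((\<lambda>u. a * u + b) has_vector_derivative a)
      (at x within {..w} \<union> (closure {..w} \<inter> closure {w<..}))"
    by (auto simp: has_real_derivative_iff_has_vector_derivative intro: has_vector_derivative_at_within)
  have "((\<lambda>u. p * u + q * exp (- L * (u - w))) has_real_derivative p - q * L * exp (- L * (x - w))) (at x)"
    by (auto intro!: derivative_eq_intros simp: algebra_simps)
  then show "((\<lambda>u. p * u + q * exp (- L * (u - w))) has_vector_derivative p - q * L * exp (- L * (x - w)))
      (at x within {w<..} \<union> (closure {..w} \<inter> closure {w<..}))"
    by (auto simp: has_real_derivative_iff_has_vector_derivative intro: has_vector_derivative_at_within)
  assume "x \<in> closure {..w}" "x \<in> closure {w<..}"
  then have "x = w" by simp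
  with assms show "a * x + b = p * x + q * exp (- L * (x - w))" "a = p - q * L * exp (- L * (x - w))"
    by simp_all
qed

text \<open>The profile is affine up to \<open>w\<close>; beyond \<open>w\<close> it bends from slope \<open>\<alpha>\<close> towards the
  line of slope \<open>\<gamma>\<close>, so it stays above \<open>\<gamma> u\<close> while its slope stays in \<open>[\<alpha>, \<gamma>]\<close>.
  A purely affine profile through \<open>(1,1)\<close> and \<open>(w, \<gamma> w + m)\<close> has slope \<open>\<alpha> < \<gamma>\<close> and
  would eventually fall below \<open>\<gamma> u\<close>.\<close>

locale exp_tail_profile =
  fixes \<alpha> \<gamma> m L w :: real
  assumes slopes: "0 \<le> \<alpha>" "\<alpha> \<le> \<gamma>" "\<gamma> \<le> 1"
    and tail: "0 \<le> m" "0 \<le> L" "m * L = \<gamma> - \<alpha>"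
    and one_le_w: "1 \<le> w"
    and glue: "\<alpha> * w + (1 - \<alpha>) = \<gamma> * w + m"
begin

definition profile :: "real \<Rightarrow> real" where
  "profile u = (if u \<in> {..w} then \<alpha> * u + (1 - \<alpha>) else \<gamma> * u + m * exp (- L * (u - w)))"

definition slope :: "real \<Rightarrow> real" where
  "slope u = \<gamma> - (\<gamma> - \<alpha>) * exp (- L * max 0 (u - w))"

lemma profile_has_derivative: "(profile has_real_derivative slope u) (at u)"
proof -
  have "(profile has_real_derivative (if u \<in> {..w} then \<alpha> else \<gamma> - m * L * exp (- L * (u - w)))) (at u)"
    unfolding profile_def[abs_def] by (rule has_real_derivative_exp_tail) (use glue tail in simp_all)
  moreover have "(if u \<in> {..w} then \<alpha> else \<gamma> - m * L * exp (- L * (u - w))) = slope u"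
    using tail by (auto simp: slope_def max_def)
  ultimately show ?thesis by simp
qed

lemma continuous_on_slope: "continuous_on UNIV slope"
  unfolding slope_def[abs_def] by (intro continuous_intros)

lemma slope_bounds: "\<alpha> \<le> slope u" "slope u \<le> \<gamma>"
proof -
  have "exp (- L * max 0 (u - w)) \<le> 1"
    using tail by (simp add: mult_nonneg_nonneg)
  then have "(\<gamma> - \<alpha>) * exp (- L * max 0 (u - w)) \<le> \<gamma> - \<alpha>"
    using slopes mult_left_le[of _ "\<gamma> - \<alpha>"] by simp
  then show "\<alpha> \<le> slope u" "slope u \<le> \<gamma>"
    using slopes by (simp_all add: slope_def)
qed

lemma linear_le_profile: "0 \<le> u \<Longrightarrow> \<gamma> * u \<le> profile u"
proof (cases "u \<le> w")
  case True
  then have "(\<gamma> - \<alpha>) * u \<le> (\<gamma> - \<alpha>) * w"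
    using slopes by (intro mult_left_mono) auto
  with True glue tail show ?thesis by (simp add: profile_def algebra_simps)
qed (use tail in \<open>simp add: profile_def\<close>)

lemma profile_pos: "0 < u \<Longrightarrow> 0 < profile u"
proof (cases "u \<le> w")
  case True
  assume "0 < u"
  then have "0 < \<alpha> * u + (1 - \<alpha>)"
    using slopes by (cases "\<alpha> = 1") (auto intro: add_nonneg_pos)
  with True show ?thesis by (simp add: profile_def)
next
  case False
  have "profile w \<le> profile u"
    using False order.trans[OF slopes(1) slope_bounds(1)]
    by (intro DERIV_nonneg_imp_nondecreasing[of w u profile]) (auto intro!: exI profile_has_derivative)
  moreover have "1 \<le> profile w"
    using slopes one_le_w mult_right_mono[of 0 \<alpha> "w - 1"] by (simp add: profile_def algebra_simps)
  ultimately show ?thesis by simp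
qed

lemma dH_le:
  assumes "c\<^sup>2 \<le> \<gamma>"
  shows "dH (0, 1) (c * x, \<gamma> * w + m) \<le> dH (0, 1) (x, w)"
proof -
  have "dH (0, 1) (c * x, profile w) \<le> dH (0, 1) (x, w)"
  proof (rule dH_contraction_le[OF profile_has_derivative continuous_on_slope _ profile_pos])
    show "profile 1 = 1" using one_le_w by (simp add: profile_def)
    fix u :: real assume "0 \<le> u"
    then show "c\<^sup>2 * u \<le> profile u"
      using linear_le_profile[of u] mult_right_mono[OF assms, of u] by simp
    have "(slope u)\<^sup>2 \<le> slope u"
      using slope_bounds[of u] slopes mult_left_le[of "slope u" "slope u"] by (simp add: power2_eq_square)
    then have "(slope u)\<^sup>2 \<le> \<gamma>" using slope_bounds(2)[of u] by linarith
    with \<open>0 \<le> u\<close> show "(slope u)\<^sup>2 * u \<le> profile u"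
      using linear_le_profile[of u] mult_right_mono[of "(slope u)\<^sup>2" \<gamma> u] by simp
  qed
  then show ?thesis
    using glue by (simp add: profile_def)
qed

end

lemma dH_le_lower_height:
  fixes c x v1 v2 :: real
  assumes "1 \<le> v1" "v1 \<le> v2" "c\<^sup>2 * v2 < v1"
  shows "dH (0, 1) (c * x, v1) \<le> dH (0, 1) (x, v2)"
proof -
  \<comment> \<open>For \<open>v\<^sub>1 = v\<^sub>2 = 1\<close> division by zero gives \<open>\<alpha> = 0\<close>, which still satisfies the glue equation.\<close>
  define \<alpha> where "\<alpha> = (v1 - 1) / (v2 - 1)"
  define \<gamma> where "\<gamma> = max \<alpha> (c\<^sup>2)"
  define m where "m = v1 - \<gamma> * v2"
  define L where "L = (\<gamma> - \<alpha>) / m"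
  have "\<alpha> * (v2 - 1) = v1 - 1"
    using assms by (cases "v2 = 1") (auto simp: \<alpha>_def)
  then have glue: "\<alpha> * v2 + (1 - \<alpha>) = v1" by algebra
  have "0 \<le> \<alpha>" "\<alpha> \<le> 1"
    using assms by (auto simp: \<alpha>_def divide_le_eq)
  have "c\<^sup>2 * v2 < 1 * v2"
    using assms by linarith
  then have "c\<^sup>2 < 1"
    by (rule mult_right_less_imp_less) (use assms in simp)
  have "\<gamma> * v2 \<le> v1"
    using glue \<open>\<alpha> \<le> 1\<close> assms by (auto simp: \<gamma>_def max_def)
  then have "0 \<le> m" by (simp add: m_def)
  have "\<gamma> = \<alpha>" if "m = 0"
    using that assms by (auto simp: m_def \<gamma>_def max_def)
  then have "m * L = \<gamma> - \<alpha>"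
    by (cases "m = 0") (simp_all add: L_def)
  moreover have "0 \<le> L"
    using \<open>0 \<le> m\<close> by (simp add: L_def \<gamma>_def)
  ultimately interpret exp_tail_profile \<alpha> \<gamma> m L v2
    using assms glue \<open>0 \<le> \<alpha>\<close> \<open>\<alpha> \<le> 1\<close> \<open>c\<^sup>2 < 1\<close> \<open>0 \<le> m\<close>
    by unfold_locales (auto simp: \<gamma>_def m_def)
  have "dH (0, 1) (c * x, \<gamma> * v2 + m) \<le> dH (0, 1) (x, v2)"
    by (rule dH_le) (simp add: \<gamma>_def)
  then show ?thesis by (simp add: m_def)
qed

lemma dH_le_scale_fst:
  assumes "c\<^sup>2 \<le> 1" and "1 \<le> v"
  shows "dH (0, 1) (c * x, v) \<le> dH (0, 1) (x, v)"
proof -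
  interpret exp_tail_profile 1 1 0 0 v
    using assms(2) by unfold_locales simp_all
  show ?thesis using dH_le[OF assms(1), of x] by simp
qed

lemma dH_le_of_mul_sqrt_le:
  fixes x1 x2 v1 v2 :: real
  assumes "1 \<le> v1" "v1 \<le> v2" "0 \<le> x1" and le: "x1 * sqrt v2 \<le> x2 * sqrt v1"
    and less: "v1 < v2 \<Longrightarrow> 0 < x1 \<Longrightarrow> x1 * sqrt v2 < x2 * sqrt v1"
  shows "dH (0, 1) (x1, v1) \<le> dH (0, 1) (x2, v2)"
  \<comment> \<open>Strictness is needed: the exponential tail only exists when \<open>c\<^sup>2 v\<^sub>2 < v\<^sub>1\<close>.\<close>
proof -
  have s: "0 < sqrt v1" "0 < sqrt v2" using assms by simp_all
  have "0 \<le> x1 * sqrt v2" using assms s by simp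
  with le have "0 \<le> x2 * sqrt v1" by linarith
  with s have "0 \<le> x2" by (simp add: zero_le_mult_iff)
  define c where "c = x1 / x2"
  have "x1 = c * x2 \<and> c * sqrt v2 \<le> sqrt v1 \<and> 0 \<le> c"
  proof (cases "x2 = 0")
    case True
    with le have "x1 * sqrt v2 \<le> 0" by simp
    with assms s have "x1 = 0" by (simp add: mult_le_0_iff)
    with True s show ?thesis by (simp add: c_def)
  next
    case False
    with \<open>0 \<le> x2\<close> have "0 < x2" by simp
    with le assms show ?thesis by (simp add: c_def field_simps)
  qed
  then have x1: "x1 = c * x2" and c_le: "c * sqrt v2 \<le> sqrt v1" and "0 \<le> c" by simp_all
  show ?thesis
  proof (cases "v1 < v2")
    case True
    have "c * sqrt v2 < sqrt v1"
    proof (cases "x1 = 0")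
      case True
      with s show ?thesis by (simp add: c_def)
    next
      case False
      with \<open>v1 < v2\<close> assms have "x1 * sqrt v2 < x2 * sqrt v1" by (intro less) simp_all
      moreover from this \<open>0 \<le> x2\<close> \<open>0 \<le> x1\<close> s have "0 < x2"
        by (cases "x2 = 0") (auto simp: mult_less_0_iff)
      ultimately show ?thesis by (simp add: c_def field_simps)
    qed
    then have "(c * sqrt v2)\<^sup>2 < (sqrt v1)\<^sup>2"
      using \<open>0 \<le> c\<close> s by (intro power_strict_mono) simp_all
    with assms have "c\<^sup>2 * v2 < v1" by (simp add: power_mult_distrib)
    then show ?thesis
      using dH_le_lower_height[OF assms(1,2)] x1 by simp
  next
    case False
    with assms have "v1 = v2" by simp
    with c_le s have "c \<le> 1" by simp
    with \<open>0 \<le> c\<close> have "c\<^sup>2 \<le> 1" by (simp add: power_le_one)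
    with x1 \<open>v1 = v2\<close> assms show ?thesis
      using dH_le_scale_fst[of c v2 x2] by simp
  qed
qed

theorem lemma2p8:
  fixes x1 v1 x2 v2 \<theta>1 \<theta>2 :: real
  assumes "v1 \<ge> 0" and "v2 \<ge> 0"
    and "\<theta>1 = delta x1 v1" and "\<theta>2 = delta x2 v2"
    and "0 \<le> \<theta>1" and "\<theta>1 \<le> \<theta>2" and "\<theta>2 < 2*pi"
    and "1 \<le> v1" and "v1 \<le> v2"
  shows "dH (0, 1) (x1, v1) \<le> dH (0, 1) (x2, v2)"
proof -
  define t1 t2 where "t1 = \<theta>1 / 2" and "t2 = \<theta>2 / 2"
  have t: "0 \<le> t1" "t1 \<le> t2" "t2 < pi"
    using assms by (simp_all add: t1_def t2_def)
  have "fdelta v1 \<theta>1 = x1" "fdelta v2 \<theta>2 = x2"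
    unfolding assms(3,4) using assms(1,2) by (simp_all add: fdelta_delta)
  then have x1: "x1 = fhalf v1 t1" and x2: "x2 = fhalf v2 t2"
    by (simp_all add: fdelta_eq_fhalf t1_def t2_def)
  have "0 \<le> x1" "x1 \<le> fhalf v1 t2"
    unfolding x1 using fhalf_le[OF assms(1) t] by simp_all
  then have x1_le: "x1 * sqrt v2 \<le> fhalf v1 t2 * sqrt v2"
    using assms(2) by (simp add: mult_right_mono)
  show ?thesis
  proof (rule dH_le_of_mul_sqrt_le[OF assms(8,9) \<open>0 \<le> x1\<close>])
    show "x1 * sqrt v2 \<le> x2 * sqrt v1"
      using fhalf_mul_sqrt_le(1)[OF assms(8,9) _ t(3)] t x1_le unfolding x2 by fastforce
    assume "v1 < v2" "0 < x1"
    then have "0 < t2"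
      using \<open>x1 \<le> fhalf v1 t2\<close> t fhalf_minus[of v1 0] by (cases "t2 = 0") auto
    then show "x1 * sqrt v2 < x2 * sqrt v1"
      using fhalf_mul_sqrt_le(2)[OF assms(8,9) _ t(3) \<open>v1 < v2\<close>] x1_le unfolding x2 by fastforce
  qed
qed

end
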